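(* Let $r\in\{0,1\}$, $n\ge1$ and $\lambda\in\mathcal P_r(n)$. Then \[ I_\lambda=\sum_{D}\mathrm{sign}(D), \] where the sum is over all standard domino tableaux $D$ of shape $\lambda$.
   Context: Partitions are identified with Young diagrams in English notation. A domino is a set of two cells sharing an edge. $\delta_0=\emptyset$, $\delta_1=(1)$; $\mathcal P_r(n)$ is the set of partitions with 2-core $\delta_r$ (the 2-core is obtained by repeatedly removing dominoes while staying a partition) and size $|\delta_r|+2n$. A standard domino tableau of shape $\lambda\in\mathcal P_r(n)$ is a chain $\delta_r=\lambda^0\subset\cdots\subset\lambda^n=\lambda$ with each $\lambda^k/\lambda^{k-1}$ a domino (the domino with value $k$). For a standard Young tableau $T$ its reading word reads the rows from top to bottom, each from left to right, and $\mathrm{sign}(T)$ is the sign of this permutation; $I_\lambda=\sum_T\mathrm{sign}(T)$ over all standard Young tableaux of shape $\lambda$. For a standard domino tableau $D$, $T(D)$ is the standard Young tableau obtained (for $r=0$) by filling the domino with value $k$ with $2k-1,2k$, or (for $r=1$) by putting $1$ in the core cell and filling the domino with value $k$ with $2k,2k+1$, the smaller number in the left (horizontal domino) or upper (vertical domino) cell; $\mathrm{sign}(D)=\mathrm{sign}(T(D))$. *)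

theory Defs
  imports "HOL-Combinatorics.Permutations"
begin

text \<open>Partitions as weakly decreasing lists of positive integers; cells (row, column),
  0-indexed, English notation.\<close>

definition is_partition :: "nat list \<Rightarrow> bool" where
  "is_partition lam \<longleftrightarrow> sorted_wrt (\<ge>) lam \<and> 0 \<notin> set lam"

definition diagram :: "nat list \<Rightarrow> (nat \<times> nat) set" where
  "diagram lam = {(i, j). i < length lam \<and> j < lam ! i}"

definition psize :: "nat list \<Rightarrow> nat" where
  "psize lam = sum_list lam"

definition is_domino :: "(nat \<times> nat) set \<Rightarrow> bool" where
  "is_domino S \<longleftrightarrow> (\<exists>i j. S = {(i, j), (i, Suc j)} \<or> S = {(i, j), (Suc i, j)})"

definition domino_step :: "nat list \<Rightarrow> nat list \<Rightarrow> bool" where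
  "domino_step mu lam \<longleftrightarrow> is_partition mu \<and> is_partition lam \<and>
     diagram mu \<subseteq> diagram lam \<and> is_domino (diagram lam - diagram mu)"

definition has_two_core :: "nat list \<Rightarrow> nat list \<Rightarrow> bool" where
  "has_two_core lam mu \<longleftrightarrow> (\<lambda>a b. domino_step b a)\<^sup>*\<^sup>* lam mu \<and> \<not> (\<exists>nu. domino_step nu mu)"

definition delta :: "nat \<Rightarrow> nat list" where
  "delta r = (if r = 0 then [] else [1])"

definition P_set :: "nat \<Rightarrow> nat \<Rightarrow> nat list set" where
  "P_set r n = {lam. is_partition lam \<and> has_two_core lam (delta r) \<and>
                     psize lam = psize (delta r) + 2 * n}"

definition syt :: "nat list \<Rightarrow> ((nat \<times> nat) \<Rightarrow> nat) set" where
  "syt lam = {T. bij_betw T (diagram lam) {1..psize lam} \<and>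
     (\<forall>c. c \<notin> diagram lam \<longrightarrow> T c = 0) \<and>
     (\<forall>i j. (i, Suc j) \<in> diagram lam \<longrightarrow> T (i, j) < T (i, Suc j)) \<and>
     (\<forall>i j. (Suc i, j) \<in> diagram lam \<longrightarrow> T (i, j) < T (Suc i, j))}"

definition reading_word :: "nat list \<Rightarrow> ((nat \<times> nat) \<Rightarrow> nat) \<Rightarrow> nat list" where
  "reading_word lam T = concat (map (\<lambda>i. map (\<lambda>j. T (i, j)) [0..<lam ! i]) [0..<length lam])"

definition word_perm :: "nat list \<Rightarrow> nat \<Rightarrow> nat" where
  "word_perm w = (\<lambda>k. if 1 \<le> k \<and> k \<le> length w then w ! (k - 1) else k)"

definition tsign :: "nat list \<Rightarrow> ((nat \<times> nat) \<Rightarrow> nat) \<Rightarrow> int" where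
  "tsign lam T = sign (word_perm (reading_word lam T))"

definition I_lam :: "nat list \<Rightarrow> int" where
  "I_lam lam = (\<Sum>T\<in>syt lam. tsign lam T)"

text \<open>Standard domino tableaux of shape lam (core delta r, n dominoes): chains
  delta r = ch!0 \<subset> ... \<subset> ch!n = lam, each step adding a domino.\<close>
definition sdt :: "nat \<Rightarrow> nat \<Rightarrow> nat list \<Rightarrow> nat list list set" where
  "sdt r n lam = {ch. length ch = Suc n \<and> ch ! 0 = delta r \<and> ch ! n = lam \<and>
     (\<forall>k<n. domino_step (ch ! k) (ch ! Suc k))}"

text \<open>The Young tableau T(D): core cell gets 1 (r = 1); the domino with value k gets
  r+2k-1 in its left/upper cell (the one with smaller i+j) and r+2k in the other.\<close>
definition dom_to_syt :: "nat \<Rightarrow> nat \<Rightarrow> nat list list \<Rightarrow> (nat \<times> nat) \<Rightarrow> nat" where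
  "dom_to_syt r n ch = (\<lambda>(i, j).
     if (i, j) \<in> diagram (ch ! 0) then 1
     else if (\<exists>k\<in>{1..n}. (i, j) \<in> diagram (ch ! k) - diagram (ch ! (k - 1))) then
       (let k = (LEAST k. (i, j) \<in> diagram (ch ! k));
            D = diagram (ch ! k) - diagram (ch ! (k - 1)) in
        if (\<forall>(a, b)\<in>D. i + j \<le> a + b) then r + 2 * k - 1 else r + 2 * k)
     else 0)"

definition dsign :: "nat \<Rightarrow> nat \<Rightarrow> nat list \<Rightarrow> nat list list \<Rightarrow> int" where
  "dsign r n lam ch = tsign lam (dom_to_syt r n ch)"

end

theory Submission
  imports Defs
begin

(* A sign-reversing involution. Call k paired in a standard Young tableau T if the entries
   r + 2k - 1 and r + 2k of T occupy a domino. The tableaux in which every k is paired are exactly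
   the tableaux T(D), and D is recovered from T(D) by cutting along the sublevel sets
   {T \<le> r + 2k}, so they contribute the right-hand side. On every other tableau, exchange the
   two entries of the least unpaired k: being consecutive and not in a domino, they are not in
   adjacent cells, so the result is again standard; the set of unpaired k does not change, so
   this is an involution, and it multiplies the sign of the reading word by -1. *)

lemma diagram_eq_Sigma: "diagram mu = Sigma {..<length mu} (\<lambda>i. {..<mu ! i})"
  by (auto simp: diagram_def)

lemma finite_diagram [simp]: "finite (diagram mu)"
  by (simp add: diagram_eq_Sigma)

lemma card_diagram: "card (diagram mu) = psize mu"
  by (simp add: diagram_eq_Sigma psize_def sum_list_sum_nth atLeast0LessThan)

lemma diagram_down_closed:
  assumes "is_partition mu" "(i, j) \<in> diagram mu" "i' \<le> i" "j' \<le> j"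
  shows "(i', j') \<in> diagram mu"
proof -
  have "i < length mu" "j < mu ! i" using assms(2) by (auto simp: diagram_def)
  moreover have "mu ! i \<le> mu ! i'"
    using assms(1,3) \<open>i < length mu\<close> unfolding is_partition_def
    by (cases "i' = i") (auto simp: sorted_wrt_iff_nth_less)
  ultimately show ?thesis using assms(3,4) by (auto simp: diagram_def)
qed

lemma first_column_in_diagram_iff:
  assumes "is_partition mu"
  shows "(i, 0) \<in> diagram mu \<longleftrightarrow> i < length mu"
proof -
  have "i < length mu \<Longrightarrow> mu ! i > 0" using assms unfolding is_partition_def
    by (metis gr0I nth_mem)
  thus ?thesis by (auto simp: diagram_def)
qed

lemma partition_eqI_diagram:
  assumes "is_partition mu" "is_partition nu" "diagram mu = diagram nu"
  shows "mu = nu"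
proof -
  have "i < length mu \<longleftrightarrow> i < length nu" for i
    using first_column_in_diagram_iff[OF assms(1)] first_column_in_diagram_iff[OF assms(2)] assms(3)
    by auto
  hence len: "length mu = length nu" by (metis less_irrefl nat_neq_iff)
  show ?thesis
  proof (rule nth_equalityI[OF len])
    fix i assume i: "i < length mu"
    have "j < mu ! i \<longleftrightarrow> j < nu ! i" for j
      using assms(3) i len unfolding diagram_def set_eq_iff by auto
    thus "mu ! i = nu ! i" by (metis less_irrefl nat_neq_iff)
  qed
qed

lemma down_closed_eq_lessThan:
  fixes P :: "nat \<Rightarrow> bool"
  assumes down_closed: "\<And>x y. P x \<Longrightarrow> y \<le> x \<Longrightarrow> P y" and "\<not> P b"
  shows "\<exists>m. \<forall>x. P x \<longleftrightarrow> x < m"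
proof (intro exI allI iffI)
  fix x assume "P x"
  have "\<not> P (LEAST m. \<not> P m)" using \<open>\<not> P b\<close> by (rule LeastI)
  thus "x < (LEAST m. \<not> P m)" using down_closed[OF \<open>P x\<close>] by (meson not_le)
next
  fix x assume "x < (LEAST m. \<not> P m)"
  thus "P x" using not_less_Least by blast
qed

lemma down_closed_is_diagram:
  assumes fin: "finite S"
    and down_closed: "\<And>i j i' j'. (i, j) \<in> S \<Longrightarrow> i' \<le> i \<Longrightarrow> j' \<le> j \<Longrightarrow> (i', j') \<in> S"
  shows "\<exists>mu. is_partition mu \<and> diagram mu = S"
proof -
  obtain b where "\<forall>x\<in>fst ` S \<union> snd ` S. x < b"
    using fin finite_nat_set_iff_bounded by (meson finite_Un finite_imageI)
  hence out: "(i, b) \<notin> S" "(b, j) \<notin> S" for i j by force+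
  have "\<exists>m. \<forall>j. (i, j) \<in> S \<longleftrightarrow> j < m" for i
  proof (rule down_closed_eq_lessThan)
    show "(i, y) \<in> S" if "(i, x) \<in> S" "y \<le> x" for x y
      using down_closed[OF that(1) order_refl that(2)] .
  qed (rule out)
  then have "\<exists>len. \<forall>i j. (i, j) \<in> S \<longleftrightarrow> j < len i" by (intro choice) blast
  then obtain len where len: "\<And>i j. (i, j) \<in> S \<longleftrightarrow> j < len i" by blast
  have "\<exists>m. \<forall>i. (i, 0) \<in> S \<longleftrightarrow> i < m"
  proof (rule down_closed_eq_lessThan)
    show "(y, 0) \<in> S" if "(x, 0) \<in> S" "y \<le> x" for x y
      using down_closed[OF that order_refl] .
  qed (rule out)
  then obtain m where m: "\<And>i. (i, 0) \<in> S \<longleftrightarrow> i < m" by blast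
  have len_antimono: "len i' \<le> len i" if "i \<le> i'" for i i'
  proof (rule ccontr)
    assume "\<not> len i' \<le> len i"
    hence "(i', len i) \<in> S" using len by simp
    hence "(i, len i) \<in> S" using down_closed that by blast
    thus False using len by simp
  qed
  define mu where "mu = map len [0..<m]"
  have "is_partition mu"
    unfolding is_partition_def mu_def
    using len m by (auto simp: sorted_wrt_iff_nth_less len_antimono) (metis less_irrefl)
  moreover have "diagram mu = S"
    using down_closed[of _ _ _ 0] len m by (auto simp: diagram_def mu_def)
  ultimately show ?thesis by blast
qed

lemma bij_betw_if_inj_on_card_eq:
  assumes "finite B" "inj_on f A" "f ` A \<subseteq> B" "card A = card B"
  shows "bij_betw f A B"
  unfolding bij_betw_def using assms card_image card_subset_eq by metis

lemma permutation_word_perm: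
  assumes "distinct w" "set w = {1..length w}"
  shows "permutation (word_perm w)"
proof -
  let ?N = "length w"
  have "inj_on (word_perm w) {1..?N}"
  proof
    fix x y assume "x \<in> {1..?N}" "y \<in> {1..?N}" "word_perm w x = word_perm w y"
    hence "w ! (x - 1) = w ! (y - 1)" "x - 1 < ?N" "y - 1 < ?N" by (auto simp: word_perm_def)
    hence "x - 1 = y - 1" using assms(1) nth_eq_iff_index_eq by blast
    thus "x = y" using \<open>x \<in> _\<close> \<open>y \<in> _\<close> by auto
  qed
  moreover have "word_perm w ` {1..?N} \<subseteq> {1..?N}"
  proof
    fix y assume "y \<in> word_perm w ` {1..?N}"
    then obtain x where "x \<in> {1..?N}" "y = w ! (x - 1)" by (auto simp: word_perm_def)
    hence "y \<in> set w" by auto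
    thus "y \<in> {1..?N}" using assms(2) by simp
  qed
  ultimately have "bij_betw (word_perm w) {1..?N} {1..?N}"
    by (intro bij_betw_if_inj_on_card_eq) auto
  hence "word_perm w permutes {1..?N}"
    by (rule bij_imp_permutes) (auto simp: word_perm_def)
  thus ?thesis using permutation_permutes by blast
qed

lemma word_perm_map:
  assumes "\<And>k. k \<notin> {1..length w} \<Longrightarrow> f k = k"
  shows "word_perm (map f w) = f \<circ> word_perm w"
  using assms by (auto simp: word_perm_def fun_eq_iff)

lemma reading_word_comp: "reading_word lam (f \<circ> T) = map f (reading_word lam T)"
  by (simp add: reading_word_def map_concat o_def)

lemma length_reading_word: "length (reading_word lam T) = psize lam"
  by (simp add: reading_word_def length_concat o_def map_nth psize_def)

lemma set_reading_word: "set (reading_word lam T) = T ` diagram lam"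
proof
  show "set (reading_word lam T) \<subseteq> T ` diagram lam"
    by (auto simp: reading_word_def diagram_def)
  show "T ` diagram lam \<subseteq> set (reading_word lam T)"
    unfolding reading_word_def diagram_def by force
qed

lemma permutation_word_perm_syt:
  assumes "T \<in> syt lam"
  shows "permutation (word_perm (reading_word lam T))"
proof -
  let ?w = "reading_word lam T"
  have "T ` diagram lam = {1..psize lam}" using assms by (simp add: syt_def bij_betw_def)
  hence set: "set ?w = {1..length ?w}" by (simp add: set_reading_word length_reading_word)
  hence "distinct ?w" by (intro card_distinct) simp
  thus ?thesis using permutation_word_perm set by blast
qed

lemma tsign_transpose:
  assumes "T \<in> syt lam" "1 \<le> a" "Suc a \<le> psize lam"
  shows "tsign lam (transpose a (Suc a) \<circ> T) = - tsign lam T"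
proof -
  have "word_perm (reading_word lam (transpose a (Suc a) \<circ> T)) =
        transpose a (Suc a) \<circ> word_perm (reading_word lam T)"
    unfolding reading_word_comp using assms(2,3)
    by (intro word_perm_map) (auto simp: length_reading_word transpose_def)
  thus ?thesis
    using permutation_word_perm_syt[OF assms(1)]
    by (simp add: tsign_def sign_compose permutation_swap_id sign_swap_id)
qed

lemma tsign_neq_0: "tsign lam T \<noteq> 0"
  by (simp add: tsign_def sign_def)

lemma syt_outside: "T \<in> syt lam \<Longrightarrow> c \<notin> diagram lam \<Longrightarrow> T c = 0"
  by (cases c) (simp add: syt_def)

lemma finite_syt: "finite (syt lam)"
proof (rule inj_on_finite)
  let ?D = "diagram lam"
  show "inj_on (\<lambda>T. restrict T ?D) (syt lam)"
  proof
    fix T T' assume h: "T \<in> syt lam" "T' \<in> syt lam" "restrict T ?D = restrict T' ?D"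
    show "T = T'"
    proof
      fix x show "T x = T' x"
      proof (cases "x \<in> ?D")
        case True thus ?thesis using h(3) by (metis restrict_apply')
      next
        case False thus ?thesis using syt_outside[OF h(1)] syt_outside[OF h(2)] by simp
      qed
    qed
  qed
  show "(\<lambda>T. restrict T ?D) ` syt lam \<subseteq> PiE ?D (\<lambda>_. {1..psize lam})"
    by (auto simp: syt_def bij_betw_def)
  show "finite (PiE ?D (\<lambda>_. {1..psize lam}))" by (intro finite_PiE) auto
qed

lemma syt_adjacent_less:
  assumes "T \<in> syt lam" "q \<in> diagram lam" "q = (fst p, Suc (snd p)) \<or> q = (Suc (fst p), snd p)"
  shows "T p < T q"
  using assms by (cases p) (auto simp: syt_def)

lemma syt_row_mono:
  assumes "T \<in> syt lam" "(i, j) \<in> diagram lam" "j' \<le> j"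
  shows "T (i, j') \<le> T (i, j)"
  using assms(3,2)
proof (induction j rule: dec_induct)
  case (step j)
  have "(i, j) \<in> diagram lam" using step.prems by (auto simp: diagram_def)
  hence "T (i, j') \<le> T (i, j)" by (rule step.IH)
  also have "T (i, j) < T (i, Suc j)" using step.prems assms(1) by (auto simp: syt_def)
  finally show ?case by simp
qed simp

lemma syt_col_mono:
  assumes "is_partition lam" "T \<in> syt lam" "(i, j) \<in> diagram lam" "i' \<le> i"
  shows "T (i', j) \<le> T (i, j)"
  using assms(4,3)
proof (induction i rule: dec_induct)
  case (step i)
  have "(i, j) \<in> diagram lam" using diagram_down_closed[OF assms(1) step.prems, of i j] by simp
  hence "T (i', j) \<le> T (i, j)" by (rule step.IH)
  also have "T (i, j) < T (Suc i, j)" using step.prems assms(2) by (auto simp: syt_def)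
  finally show ?case by simp
qed simp

lemma syt_mono:
  assumes "is_partition lam" "T \<in> syt lam" "(i, j) \<in> diagram lam" "i' \<le> i" "j' \<le> j"
  shows "T (i', j') \<le> T (i, j)"
proof -
  have "(i', j) \<in> diagram lam" using diagram_down_closed[OF assms(1,3,4)] by simp
  hence "T (i', j') \<le> T (i', j)" using syt_row_mono[OF assms(2)] assms(5) by blast
  also have "\<dots> \<le> T (i, j)" using syt_col_mono[OF assms(1-4)] .
  finally show ?thesis .
qed

definition entries_form_domino :: "nat list \<Rightarrow> nat \<Rightarrow> (nat \<times> nat \<Rightarrow> nat) \<Rightarrow> bool" where
  "entries_form_domino lam a T \<longleftrightarrow>
     (\<exists>c1\<in>diagram lam. \<exists>c2\<in>diagram lam. T c1 = a \<and> T c2 = Suc a \<and> is_domino {c1, c2})"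

lemma transpose_Suc_less:
  fixes x y a :: nat
  assumes "x < y" "\<not> (x = a \<and> y = Suc a)"
  shows "transpose a (Suc a) x < transpose a (Suc a) y"
  using assms by (auto simp: transpose_def)

lemma transpose_syt:
  assumes "is_partition lam" "T \<in> syt lam" "1 \<le> a" "Suc a \<le> psize lam"
    "\<not> entries_form_domino lam a T"
  shows "transpose a (Suc a) \<circ> T \<in> syt lam"
proof -
  let ?t = "transpose a (Suc a)"
  have bij: "bij_betw T (diagram lam) {1..psize lam}"
    and outside: "\<forall>c. c \<notin> diagram lam \<longrightarrow> T c = 0"
    and row: "\<forall>i j. (i, Suc j) \<in> diagram lam \<longrightarrow> T (i, j) < T (i, Suc j)"
    and col: "\<forall>i j. (Suc i, j) \<in> diagram lam \<longrightarrow> T (i, j) < T (Suc i, j)"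
    using assms(2) by (auto simp: syt_def)
  have "?t permutes {1..psize lam}" using assms(3,4) by (intro permutes_swap_id) auto
  hence "bij_betw (?t \<circ> T) (diagram lam) {1..psize lam}"
    using bij permutes_imp_bij bij_betw_trans by blast
  moreover have "\<forall>c. c \<notin> diagram lam \<longrightarrow> (?t \<circ> T) c = 0"
    using outside assms(3) by (auto simp: transpose_def)
  moreover have "(?t \<circ> T) (i, j) < (?t \<circ> T) (i, Suc j)" if "(i, Suc j) \<in> diagram lam" for i j
  proof -
    have "(i, j) \<in> diagram lam" using that by (auto simp: diagram_def)
    moreover have "is_domino {(i, j), (i, Suc j)}" unfolding is_domino_def by blast
    ultimately have "\<not> (T (i, j) = a \<and> T (i, Suc j) = Suc a)"
      using assms(5) that unfolding entries_form_domino_def by blast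
    thus ?thesis using row that transpose_Suc_less by simp
  qed
  moreover have "(?t \<circ> T) (i, j) < (?t \<circ> T) (Suc i, j)" if "(Suc i, j) \<in> diagram lam" for i j
  proof -
    have "(i, j) \<in> diagram lam" using diagram_down_closed[OF assms(1) that, of i j] by simp
    moreover have "is_domino {(i, j), (Suc i, j)}" unfolding is_domino_def by blast
    ultimately have "\<not> (T (i, j) = a \<and> T (Suc i, j) = Suc a)"
      using assms(5) that unfolding entries_form_domino_def by blast
    thus ?thesis using col that transpose_Suc_less by simp
  qed
  ultimately show ?thesis unfolding syt_def by blast
qed

lemma entries_form_domino_transpose_same:
  "entries_form_domino lam a (transpose a (Suc a) \<circ> T) \<longleftrightarrow> entries_form_domino lam a T"
proof -
  have "transpose a (Suc a) x = a \<longleftrightarrow> x = Suc a" "transpose a (Suc a) x = Suc a \<longleftrightarrow> x = a" for x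
    by (auto simp: transpose_eq_iff)
  moreover have "is_domino {x, y} = is_domino {y, x}" for x y by (simp add: insert_commute)
  ultimately show ?thesis unfolding entries_form_domino_def o_def by blast
qed

lemma entries_form_domino_transpose_other:
  assumes "a' \<noteq> b" "a' \<noteq> Suc b" "Suc a' \<noteq> b"
  shows "entries_form_domino lam a' (transpose b (Suc b) \<circ> T) \<longleftrightarrow> entries_form_domino lam a' T"
proof -
  have "transpose b (Suc b) x = a' \<longleftrightarrow> x = a'" "transpose b (Suc b) x = Suc a' \<longleftrightarrow> x = Suc a'" for x
    using assms by (auto simp: transpose_eq_iff)
  thus ?thesis unfolding entries_form_domino_def o_def by simp
qed

definition domino_syt :: "nat \<Rightarrow> nat \<Rightarrow> nat list \<Rightarrow> (nat \<times> nat \<Rightarrow> nat) set" where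
  "domino_syt r n lam = {T \<in> syt lam. \<forall>k\<in>{1..n}. entries_form_domino lam (r + 2 * k - 1) T}"

definition unpaired :: "nat \<Rightarrow> nat \<Rightarrow> nat list \<Rightarrow> (nat \<times> nat \<Rightarrow> nat) \<Rightarrow> nat set" where
  "unpaired r n lam T = {k \<in> {1..n}. \<not> entries_form_domino lam (r + 2 * k - 1) T}"

definition swap_first_unpaired :: "nat \<Rightarrow> nat \<Rightarrow> nat list \<Rightarrow> (nat \<times> nat \<Rightarrow> nat) \<Rightarrow> nat \<times> nat \<Rightarrow> nat" where
  "swap_first_unpaired r n lam T =
     (let a = r + 2 * Min (unpaired r n lam T) - 1 in transpose a (Suc a) \<circ> T)"

lemma domino_syt_eq_unpaired_empty: "domino_syt r n lam = {T \<in> syt lam. unpaired r n lam T = {}}"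
  by (auto simp: domino_syt_def unpaired_def)

lemma unpaired_transpose:
  assumes "k0 \<in> {1..n}"
  shows "unpaired r n lam (transpose (r + 2 * k0 - 1) (Suc (r + 2 * k0 - 1)) \<circ> T) = unpaired r n lam T"
proof -
  let ?t = "transpose (r + 2 * k0 - 1) (Suc (r + 2 * k0 - 1))"
  have "entries_form_domino lam (r + 2 * k - 1) (?t \<circ> T) \<longleftrightarrow> entries_form_domino lam (r + 2 * k - 1) T"
    if "k \<in> {1..n}" for k
  proof (cases "k = k0")
    case True
    thus ?thesis using entries_form_domino_transpose_same by simp
  next
    case False
    have "r + 2 * k - 1 \<noteq> r + 2 * k0 - 1" "r + 2 * k - 1 \<noteq> Suc (r + 2 * k0 - 1)"
      "Suc (r + 2 * k - 1) \<noteq> r + 2 * k0 - 1"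
      using False that assms by auto
    thus ?thesis by (rule entries_form_domino_transpose_other)
  qed
  thus ?thesis by (auto simp: unpaired_def)
qed

lemma syt_inj: "T \<in> syt lam \<Longrightarrow> inj_on T (diagram lam)"
  by (simp add: syt_def bij_betw_def)

lemma syt_image: "T \<in> syt lam \<Longrightarrow> T ` diagram lam = {1..psize lam}"
  by (simp add: syt_def bij_betw_def)

lemma syt_sublevel_is_diagram:
  assumes "is_partition lam" "T \<in> syt lam"
  shows "\<exists>mu. is_partition mu \<and> diagram mu = {c \<in> diagram lam. T c \<le> m}"
proof (rule down_closed_is_diagram)
  fix i j i' j' assume c: "(i, j) \<in> {c \<in> diagram lam. T c \<le> m}" "i' \<le> i" "j' \<le> j"
  hence "(i', j') \<in> diagram lam" using diagram_down_closed[OF assms(1)] by blast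
  moreover have "T (i', j') \<le> T (i, j)" using syt_mono[OF assms] c by blast
  ultimately show "(i', j') \<in> {c \<in> diagram lam. T c \<le> m}" using c(1) by simp
qed simp

lemma diagram_delta: "diagram (delta r) = (if r = 0 then {} else {(0, 0)})"
  by (auto simp: delta_def diagram_def)

lemma is_partition_delta: "is_partition (delta r)"
  by (simp add: delta_def is_partition_def)

lemma syt_sublevel_delta:
  assumes "is_partition lam" "T \<in> syt lam" "r \<in> {0, 1}" "r \<le> psize lam"
  shows "{c \<in> diagram lam. T c \<le> r} = diagram (delta r)"
proof (cases "r = 0")
  case True
  thus ?thesis using syt_image[OF assms(2)] by (force simp: diagram_delta)
next
  case False
  hence r: "r = 1" using assms(3) by simp
  then obtain c where c: "c \<in> diagram lam" "T c = 1"
    using syt_image[OF assms(2)] assms(4) by (metis atLeastAtMost_iff imageE order_refl)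
  have corner: "(0, 0) \<in> diagram lam" using diagram_down_closed[OF assms(1), of "fst c" "snd c"] c by simp
  have "T (0, 0) \<le> T c" using syt_mono[OF assms(1,2), of "fst c" "snd c"] c by simp
  moreover have "T (0, 0) \<in> {1..psize lam}" using syt_image[OF assms(2)] corner by blast
  ultimately have "T (0, 0) = 1" using c(2) by simp
  have "{c \<in> diagram lam. T c \<le> 1} = {(0, 0)}"
  proof (intro set_eqI iffI)
    fix x assume x: "x \<in> {c \<in> diagram lam. T c \<le> 1}"
    hence "T x \<in> {1..psize lam}" using syt_image[OF assms(2)] by blast
    hence "T x = T (0, 0)" using x \<open>T (0, 0) = 1\<close> by simp
    thus "x \<in> {(0, 0)}" using inj_onD[OF syt_inj[OF assms(2)]] x corner by blast
  qed (use corner \<open>T (0, 0) = 1\<close> in simp)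
  thus ?thesis using r by (simp add: diagram_delta)
qed

lemma domino_step_syt_sublevel:
  assumes "T \<in> syt lam" "entries_form_domino lam (Suc m) T"
    "is_partition mu" "diagram mu = {c \<in> diagram lam. T c \<le> m}"
    "is_partition nu" "diagram nu = {c \<in> diagram lam. T c \<le> Suc (Suc m)}"
  shows "domino_step mu nu"
proof -
  obtain c1 c2 where c: "c1 \<in> diagram lam" "c2 \<in> diagram lam" "T c1 = Suc m" "T c2 = Suc (Suc m)"
    "is_domino {c1, c2}"
    using assms(2) unfolding entries_form_domino_def by blast
  have "diagram nu - diagram mu = {c1, c2}"
  proof (intro set_eqI iffI)
    fix c assume "c \<in> diagram nu - diagram mu"
    hence "c \<in> diagram lam" "T c = T c1 \<or> T c = T c2" using assms(4,6) c(3,4) by auto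
    thus "c \<in> {c1, c2}" using inj_onD[OF syt_inj[OF assms(1)]] c(1,2) by blast
  qed (use assms(4,6) c in auto)
  moreover have "diagram mu \<subseteq> diagram nu" using assms(4,6) by auto
  ultimately show ?thesis using assms(3,5) c(5) unfolding domino_step_def by simp
qed

lemma domino_cells:
  assumes "is_domino S"
  shows "\<exists>p q. S = {p, q} \<and> (q = (fst p, Suc (snd p)) \<or> q = (Suc (fst p), snd p))"
proof -
  obtain i j where "S = {(i, j), (i, Suc j)} \<or> S = {(i, j), (Suc i, j)}"
    using assms unfolding is_domino_def by blast
  thus ?thesis by (elim disjE) force+
qed

definition domino_level :: "nat list list \<Rightarrow> nat \<times> nat \<Rightarrow> nat" where
  "domino_level ch c = (LEAST k. c \<in> diagram (ch ! k))"

locale domino_shape =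
  fixes r n :: nat and lam :: "nat list"
  assumes r01: "r \<in> {0, 1}"
    and partition_lam: "is_partition lam"
    and psize_lam: "psize lam = r + 2 * n"
begin

lemma is_partition_sdt_nth:
  assumes "ch \<in> sdt r n lam" "k \<le> n"
  shows "is_partition (ch ! k)"
proof (cases "k < n")
  case True thus ?thesis using assms by (auto simp: sdt_def domino_step_def)
next
  case False thus ?thesis using assms partition_lam by (auto simp: sdt_def)
qed

lemma diagram_sdt_mono:
  assumes "ch \<in> sdt r n lam" "k \<le> k'" "k' \<le> n"
  shows "diagram (ch ! k) \<subseteq> diagram (ch ! k')"
  using assms(2,3)
proof (induction k' rule: dec_induct)
  case (step m)
  hence "domino_step (ch ! m) (ch ! Suc m)" using assms(1) by (auto simp: sdt_def)
  thus ?case using step by (auto simp: domino_step_def)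
qed simp

lemma diagram_sdt_subset:
  assumes "ch \<in> sdt r n lam" "k \<le> n"
  shows "diagram (ch ! k) \<subseteq> diagram lam"
  using diagram_sdt_mono[OF assms order_refl] assms(1) by (auto simp: sdt_def)

lemma diagram_sdt_0: "ch \<in> sdt r n lam \<Longrightarrow> diagram (ch ! 0) = diagram (delta r)"
  by (simp add: sdt_def)

lemma is_domino_sdt:
  assumes "ch \<in> sdt r n lam" "k \<in> {1..n}"
  shows "is_domino (diagram (ch ! k) - diagram (ch ! (k - 1)))"
proof -
  have "k - 1 < n" using assms(2) by auto
  hence "domino_step (ch ! (k - 1)) (ch ! Suc (k - 1))" using assms(1) by (simp add: sdt_def)
  moreover have "Suc (k - 1) = k" using assms(2) by simp
  ultimately show ?thesis by (simp add: domino_step_def)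
qed

lemma domino_level_le:
  assumes "ch \<in> sdt r n lam" "c \<in> diagram lam"
  shows "domino_level ch c \<le> n"
proof -
  have "c \<in> diagram (ch ! n)" using assms by (simp add: sdt_def)
  thus ?thesis unfolding domino_level_def by (rule Least_le)
qed

lemma in_diagram_domino_level:
  assumes "ch \<in> sdt r n lam" "c \<in> diagram lam"
  shows "c \<in> diagram (ch ! domino_level ch c)"
proof -
  have "c \<in> diagram (ch ! n)" using assms by (simp add: sdt_def)
  thus ?thesis unfolding domino_level_def by (rule LeastI)
qed

lemma domino_level_new_cell:
  assumes "ch \<in> sdt r n lam" "c \<in> diagram lam" "domino_level ch c \<noteq> 0"
  shows "domino_level ch c \<in> {1..n}"
    "c \<in> diagram (ch ! domino_level ch c) - diagram (ch ! (domino_level ch c - 1))"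
proof -
  show "domino_level ch c \<in> {1..n}" using domino_level_le[OF assms(1,2)] assms(3) by simp
  have "c \<notin> diagram (ch ! (domino_level ch c - 1))"
    using not_less_Least[of "domino_level ch c - 1" "\<lambda>k. c \<in> diagram (ch ! k)"] assms(3)
    unfolding domino_level_def by simp
  thus "c \<in> diagram (ch ! domino_level ch c) - diagram (ch ! (domino_level ch c - 1))"
    using in_diagram_domino_level[OF assms(1,2)] by simp
qed

lemma domino_level_eq:
  assumes "ch \<in> sdt r n lam" "k \<in> {1..n}" "c \<in> diagram (ch ! k) - diagram (ch ! (k - 1))"
  shows "domino_level ch c = k"
  unfolding domino_level_def
proof (rule Least_equality)
  show "c \<in> diagram (ch ! k)" using assms by simp
  fix k' assume k': "c \<in> diagram (ch ! k')"
  show "k \<le> k'"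
  proof (rule ccontr)
    assume "\<not> k \<le> k'"
    hence "diagram (ch ! k') \<subseteq> diagram (ch ! (k - 1))" using assms(2)
      by (intro diagram_sdt_mono[OF assms(1)]) auto
    thus False using k' assms(3) by auto
  qed
qed

lemma domino_level_mono:
  assumes "ch \<in> sdt r n lam" "c' \<in> diagram lam" "fst c \<le> fst c'" "snd c \<le> snd c'"
  shows "domino_level ch c \<le> domino_level ch c'"
proof -
  have "is_partition (ch ! domino_level ch c')"
    using is_partition_sdt_nth[OF assms(1) domino_level_le[OF assms(1,2)]] .
  hence "c \<in> diagram (ch ! domino_level ch c')"
    using diagram_down_closed[of _ "fst c'" "snd c'" "fst c" "snd c"]
      in_diagram_domino_level[OF assms(1,2)] assms(3,4) by simp
  thus ?thesis unfolding domino_level_def by (rule Least_le)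
qed

lemma dom_to_syt_core:
  assumes "c \<in> diagram (ch ! 0)"
  shows "dom_to_syt r n ch c = 1"
  using assms by (cases c) (simp add: dom_to_syt_def)

lemma dom_to_syt_outside:
  assumes "ch \<in> sdt r n lam" "c \<notin> diagram lam"
  shows "dom_to_syt r n ch c = 0"
proof -
  have "c \<notin> diagram (ch ! k)" if "k \<le> n" for k
    using diagram_sdt_subset[OF assms(1) that] assms(2) by auto
  thus ?thesis by (cases c) (auto simp: dom_to_syt_def)
qed

lemma dom_to_syt_new_cell:
  assumes "ch \<in> sdt r n lam" "k \<in> {1..n}" "c \<in> diagram (ch ! k) - diagram (ch ! (k - 1))"
  shows "dom_to_syt r n ch c =
    (if \<forall>(a, b)\<in>diagram (ch ! k) - diagram (ch ! (k - 1)). fst c + snd c \<le> a + b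
     then r + 2 * k - 1 else r + 2 * k)"
proof -
  have level: "(LEAST k. c \<in> diagram (ch ! k)) = k"
    using domino_level_eq[OF assms] by (simp add: domino_level_def)
  have "diagram (ch ! 0) \<subseteq> diagram (ch ! (k - 1))"
    using assms(2) by (intro diagram_sdt_mono[OF assms(1)]) auto
  hence not_core: "c \<notin> diagram (ch ! 0)" using assms(3) by auto
  obtain i j where c: "c = (i, j)" by (cases c)
  have "\<exists>k\<in>{1..n}. (i, j) \<in> diagram (ch ! k) - diagram (ch ! (k - 1))" using assms(2,3) c by blast
  thus ?thesis using not_core level unfolding c dom_to_syt_def Let_def by simp
qed

lemma dom_to_syt_domino:
  assumes "ch \<in> sdt r n lam" "k \<in> {1..n}"
  obtains p q where "diagram (ch ! k) - diagram (ch ! (k - 1)) = {p, q}"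
    "q = (fst p, Suc (snd p)) \<or> q = (Suc (fst p), snd p)"
    "p \<in> diagram lam" "q \<in> diagram lam"
    "dom_to_syt r n ch p = r + 2 * k - 1" "dom_to_syt r n ch q = r + 2 * k"
proof -
  obtain p q where pq: "diagram (ch ! k) - diagram (ch ! (k - 1)) = {p, q}"
    "q = (fst p, Suc (snd p)) \<or> q = (Suc (fst p), snd p)"
    using domino_cells[OF is_domino_sdt[OF assms]] by blast
  have "diagram (ch ! k) \<subseteq> diagram lam" using assms by (intro diagram_sdt_subset[OF assms(1)]) auto
  hence in_lam: "p \<in> diagram lam" "q \<in> diagram lam" using pq(1) by auto
  have new_p: "p \<in> diagram (ch ! k) - diagram (ch ! (k - 1))"
    and new_q: "q \<in> diagram (ch ! k) - diagram (ch ! (k - 1))" using pq(1) by simp_all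
  have p_first: "\<forall>(a, b)\<in>diagram (ch ! k) - diagram (ch ! (k - 1)). fst p + snd p \<le> a + b"
    using pq by auto
  have "dom_to_syt r n ch p = r + 2 * k - 1"
    using dom_to_syt_new_cell[OF assms new_p] if_P[OF p_first] by (rule trans)
  moreover have q_second:
    "\<not> (\<forall>(a, b)\<in>diagram (ch ! k) - diagram (ch ! (k - 1)). fst q + snd q \<le> a + b)"
    using pq by auto
  have "dom_to_syt r n ch q = r + 2 * k"
    using dom_to_syt_new_cell[OF assms new_q] if_not_P[OF q_second] by (rule trans)
  ultimately show ?thesis using that pq in_lam by blast
qed

lemma dom_to_syt_level_bounds:
  assumes "ch \<in> sdt r n lam" "c \<in> diagram lam"
  shows "r + 2 * domino_level ch c \<le> dom_to_syt r n ch c + 1"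
    "dom_to_syt r n ch c \<le> r + 2 * domino_level ch c" "1 \<le> dom_to_syt r n ch c"
proof -
  let ?l = "domino_level ch c"
  have "dom_to_syt r n ch c \<in> {r + 2 * ?l - 1, r + 2 * ?l} \<and> ?l \<ge> 1 \<or>
        dom_to_syt r n ch c = 1 \<and> r = 1 \<and> ?l = 0"
  proof (cases "?l = 0")
    case True
    hence core: "c \<in> diagram (ch ! 0)" using in_diagram_domino_level[OF assms] by simp
    hence "r = 1" using diagram_sdt_0[OF assms(1)] diagram_delta[of r] r01 by (auto split: if_splits)
    thus ?thesis using True dom_to_syt_core[OF core] by simp
  next
    case False
    obtain p q where "diagram (ch ! ?l) - diagram (ch ! (?l - 1)) = {p, q}"
      "dom_to_syt r n ch p = r + 2 * ?l - 1" "dom_to_syt r n ch q = r + 2 * ?l"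
      using dom_to_syt_domino[OF assms(1) domino_level_new_cell(1)[OF assms False]] by blast
    thus ?thesis using domino_level_new_cell(2)[OF assms False] False by auto
  qed
  thus "r + 2 * ?l \<le> dom_to_syt r n ch c + 1" "dom_to_syt r n ch c \<le> r + 2 * ?l"
    "1 \<le> dom_to_syt r n ch c" by auto
qed

lemma domino_level_dom_to_syt:
  assumes "ch \<in> sdt r n lam" "c \<in> diagram lam"
  shows "domino_level ch c = (dom_to_syt r n ch c + 1 - r) div 2"
  using dom_to_syt_level_bounds[OF assms] by linarith

lemma same_domino_level:
  assumes "ch \<in> sdt r n lam" "c \<in> diagram lam" "c' \<in> diagram lam" "c \<noteq> c'"
    "domino_level ch c = domino_level ch c'"
  obtains p q l where "{c, c'} = {p, q}" "q = (fst p, Suc (snd p)) \<or> q = (Suc (fst p), snd p)"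
    "dom_to_syt r n ch p = r + 2 * l - 1" "dom_to_syt r n ch q = r + 2 * l"
proof -
  let ?l = "domino_level ch c"
  have "?l \<noteq> 0"
  proof
    assume "?l = 0"
    hence "c \<in> diagram (ch ! 0)" "c' \<in> diagram (ch ! 0)"
      using in_diagram_domino_level[OF assms(1,2)] in_diagram_domino_level[OF assms(1,3)] assms(5)
      by auto
    thus False using diagram_sdt_0[OF assms(1)] diagram_delta[of r] assms(4) by (auto split: if_splits)
  qed
  obtain p q where pq: "diagram (ch ! ?l) - diagram (ch ! (?l - 1)) = {p, q}"
    "q = (fst p, Suc (snd p)) \<or> q = (Suc (fst p), snd p)"
    "dom_to_syt r n ch p = r + 2 * ?l - 1" "dom_to_syt r n ch q = r + 2 * ?l"
    using dom_to_syt_domino[OF assms(1) domino_level_new_cell(1)[OF assms(1,2) \<open>?l \<noteq> 0\<close>]] by blast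
  have "c \<in> {p, q}" "c' \<in> {p, q}"
    using domino_level_new_cell(2)[OF assms(1,2) \<open>?l \<noteq> 0\<close>]
      domino_level_new_cell(2)[OF assms(1,3)] \<open>?l \<noteq> 0\<close> assms(5) pq(1) by auto
  hence "{c, c'} = {p, q}" using assms(4) by auto
  thus ?thesis using pq(2-4) by (rule that)
qed

lemma dom_to_syt_adjacent_less:
  assumes "ch \<in> sdt r n lam" "c \<in> diagram lam" "c' \<in> diagram lam"
    "c' = (fst c, Suc (snd c)) \<or> c' = (Suc (fst c), snd c)"
  shows "dom_to_syt r n ch c < dom_to_syt r n ch c'"
proof (cases "domino_level ch c = domino_level ch c'")
  case False
  moreover have "domino_level ch c \<le> domino_level ch c'"
    using domino_level_mono[OF assms(1,3), of c] assms(4) by auto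
  ultimately show ?thesis
    using dom_to_syt_level_bounds[OF assms(1,2)] dom_to_syt_level_bounds[OF assms(1,3)] by linarith
next
  case True
  have "c \<noteq> c'" using assms(4) by (cases c) auto
  obtain p q l where pq: "{c, c'} = {p, q}"
    "q = (fst p, Suc (snd p)) \<or> q = (Suc (fst p), snd p)"
    "dom_to_syt r n ch p = r + 2 * l - 1" "dom_to_syt r n ch q = r + 2 * l"
    by (rule same_domino_level[OF assms(1,2,3) \<open>c \<noteq> c'\<close> True])
  have "fst c + snd c < fst c' + snd c'" "fst p + snd p < fst q + snd q"
    using assms(4) pq(2) by auto
  hence "c = p \<and> c' = q" using pq(1)[unfolded doubleton_eq_iff] by auto
  thus ?thesis using pq(3,4) assms(4) True dom_to_syt_level_bounds(3)[OF assms(1,3)] by auto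
qed

lemma inj_on_dom_to_syt_diagram:
  assumes ch: "ch \<in> sdt r n lam"
  shows "inj_on (dom_to_syt r n ch) (diagram lam)"
proof (rule inj_onI, rule ccontr)
  fix c c' assume c: "c \<in> diagram lam" "c' \<in> diagram lam"
    and eq: "dom_to_syt r n ch c = dom_to_syt r n ch c'" and "c \<noteq> c'"
  have "domino_level ch c = domino_level ch c'"
    using domino_level_dom_to_syt[OF ch c(1)] domino_level_dom_to_syt[OF ch c(2)] eq by simp
  then obtain p q l where pq: "{c, c'} = {p, q}"
    "q = (fst p, Suc (snd p)) \<or> q = (Suc (fst p), snd p)"
    "dom_to_syt r n ch p = r + 2 * l - 1" "dom_to_syt r n ch q = r + 2 * l"
    by (rule same_domino_level[OF ch c \<open>c \<noteq> c'\<close>])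
  have "q \<in> {c, c'}" by (simp add: pq(1))
  hence "q \<in> diagram lam" using c by auto
  hence "1 \<le> dom_to_syt r n ch q" by (rule dom_to_syt_level_bounds(3)[OF ch])
  hence "dom_to_syt r n ch p \<noteq> dom_to_syt r n ch q" using pq(3,4) by simp
  thus False using pq(1)[unfolded doubleton_eq_iff] eq by auto
qed

lemma dom_to_syt_in_syt:
  assumes "ch \<in> sdt r n lam"
  shows "dom_to_syt r n ch \<in> syt lam"
proof -
  let ?T = "dom_to_syt r n ch"
  have "?T ` diagram lam \<subseteq> {1..psize lam}"
  proof
    fix y assume "y \<in> ?T ` diagram lam"
    then obtain c where c: "c \<in> diagram lam" "y = ?T c" by blast
    thus "y \<in> {1..psize lam}"
      using dom_to_syt_level_bounds[OF assms c(1)] domino_level_le[OF assms c(1)] psize_lam by auto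
  qed
  hence "bij_betw ?T (diagram lam) {1..psize lam}"
    using inj_on_dom_to_syt_diagram[OF assms] by (intro bij_betw_if_inj_on_card_eq) (auto simp: card_diagram)
  moreover have "?T (i, j) < ?T (i, Suc j)" if "(i, Suc j) \<in> diagram lam" for i j
    using diagram_down_closed[OF partition_lam that, of i j]
    by (intro dom_to_syt_adjacent_less[OF assms _ that]) simp_all
  moreover have "?T (i, j) < ?T (Suc i, j)" if "(Suc i, j) \<in> diagram lam" for i j
    using diagram_down_closed[OF partition_lam that, of i j]
    by (intro dom_to_syt_adjacent_less[OF assms _ that]) simp_all
  ultimately show ?thesis using dom_to_syt_outside[OF assms] unfolding syt_def by blast
qed

lemma entries_form_domino_dom_to_syt:
  assumes "ch \<in> sdt r n lam" "k \<in> {1..n}"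
  shows "entries_form_domino lam (r + 2 * k - 1) (dom_to_syt r n ch)"
proof -
  obtain p q where "diagram (ch ! k) - diagram (ch ! (k - 1)) = {p, q}"
    and adjacent: "q = (fst p, Suc (snd p)) \<or> q = (Suc (fst p), snd p)"
    and cells: "p \<in> diagram lam" "q \<in> diagram lam"
    and entries: "dom_to_syt r n ch p = r + 2 * k - 1" "dom_to_syt r n ch q = r + 2 * k"
    by (rule dom_to_syt_domino[OF assms])
  have "is_domino {p, q}" unfolding is_domino_def using adjacent by (cases p) auto
  moreover have "dom_to_syt r n ch q = Suc (r + 2 * k - 1)" using entries(2) assms(2) by simp
  ultimately show ?thesis unfolding entries_form_domino_def using cells entries(1) by blast
qed

lemma diagram_sdt_nth_eq:
  assumes "ch \<in> sdt r n lam" "k \<le> n"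
  shows "diagram (ch ! k) = {c \<in> diagram lam. (dom_to_syt r n ch c + 1 - r) div 2 \<le> k}"
proof (intro set_eqI iffI)
  fix c assume c: "c \<in> diagram (ch ! k)"
  hence "c \<in> diagram lam" using diagram_sdt_subset[OF assms] by auto
  moreover have "domino_level ch c \<le> k" unfolding domino_level_def using c by (rule Least_le)
  ultimately show "c \<in> {c \<in> diagram lam. (dom_to_syt r n ch c + 1 - r) div 2 \<le> k}"
    using domino_level_dom_to_syt[OF assms(1)] by simp
next
  fix c assume "c \<in> {c \<in> diagram lam. (dom_to_syt r n ch c + 1 - r) div 2 \<le> k}"
  hence c: "c \<in> diagram lam" and "domino_level ch c \<le> k"
    using domino_level_dom_to_syt[OF assms(1)] by auto
  thus "c \<in> diagram (ch ! k)"
    using in_diagram_domino_level[OF assms(1) c] diagram_sdt_mono[OF assms(1) _ assms(2)] by blast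
qed

lemma inj_on_dom_to_syt: "inj_on (dom_to_syt r n) (sdt r n lam)"
proof
  fix ch ch' assume ch: "ch \<in> sdt r n lam" "ch' \<in> sdt r n lam"
    and eq: "dom_to_syt r n ch = dom_to_syt r n ch'"
  show "ch = ch'"
  proof (rule nth_equalityI)
    show "length ch = length ch'" using ch by (simp add: sdt_def)
    fix k assume "k < length ch"
    hence k: "k \<le> n" using ch by (simp add: sdt_def)
    have "diagram (ch ! k) = diagram (ch' ! k)"
      using diagram_sdt_nth_eq[OF ch(1) k] diagram_sdt_nth_eq[OF ch(2) k] eq by simp
    thus "ch ! k = ch' ! k"
      using partition_eqI_diagram is_partition_sdt_nth[OF ch(1) k] is_partition_sdt_nth[OF ch(2) k]
      by blast
  qed
qed

lemma sdt_of_domino_syt: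
  assumes "T \<in> domino_syt r n lam"
  shows "\<exists>ch\<in>sdt r n lam. \<forall>k\<le>n. diagram (ch ! k) = {c \<in> diagram lam. T c \<le> r + 2 * k}"
proof -
  have T: "T \<in> syt lam"
    and paired: "\<And>k. k \<in> {1..n} \<Longrightarrow> entries_form_domino lam (r + 2 * k - 1) T"
    using assms by (auto simp: domino_syt_def)
  define S where "S k = {c \<in> diagram lam. T c \<le> r + 2 * k}" for k
  have "\<forall>k. \<exists>mu. is_partition mu \<and> diagram mu = S k"
    unfolding S_def using syt_sublevel_is_diagram[OF partition_lam T] by blast
  then obtain mu where mu: "\<And>k. is_partition (mu k)" "\<And>k. diagram (mu k) = S k"
    by (metis choice)
  define ch where "ch = map mu [0..<Suc n]"
  have ch_nth: "ch ! k = mu k" if "k \<le> n" for k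
    using that unfolding ch_def by (simp del: upt_Suc add: nth_map_upt)
  have "ch \<in> sdt r n lam"
    unfolding sdt_def
  proof (intro CollectI conjI allI impI)
    show "length ch = Suc n" unfolding ch_def by simp
    have "diagram (mu 0) = diagram (delta r)"
      using syt_sublevel_delta[OF partition_lam T r01] psize_lam unfolding mu(2) S_def by simp
    thus "ch ! 0 = delta r"
      using ch_nth[of 0] partition_eqI_diagram[OF mu(1) is_partition_delta] by simp
    have "diagram (mu n) = diagram lam"
      using syt_image[OF T] psize_lam unfolding mu(2) S_def by auto
    thus "ch ! n = lam" using ch_nth[of n] partition_eqI_diagram[OF mu(1) partition_lam] by simp
    fix k assume k: "k < n"
    have "entries_form_domino lam (Suc (r + 2 * k)) T" using paired[of "Suc k"] k by simp
    moreover have "diagram (mu (Suc k)) = {c \<in> diagram lam. T c \<le> Suc (Suc (r + 2 * k))}"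
      unfolding mu(2) S_def by simp
    ultimately have "domino_step (mu k) (mu (Suc k))"
      using domino_step_syt_sublevel[OF T _ mu(1) _ mu(1)] mu(2) unfolding S_def by blast
    thus "domino_step (ch ! k) (ch ! Suc k)" using ch_nth k by simp
  qed
  moreover have "\<forall>k\<le>n. diagram (ch ! k) = S k" using ch_nth mu(2) by simp
  ultimately show ?thesis unfolding S_def by blast
qed

lemma dom_to_syt_eq_if_sublevels:
  assumes ch: "ch \<in> sdt r n lam" and T: "T \<in> syt lam"
    and sublevels: "\<And>k. k \<le> n \<Longrightarrow> diagram (ch ! k) = {c \<in> diagram lam. T c \<le> r + 2 * k}"
  shows "dom_to_syt r n ch = T"
proof
  fix c
  have T_range: "T x \<in> {1..psize lam}" if "x \<in> diagram lam" for x
    using syt_image[OF T] that by blast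
  show "dom_to_syt r n ch c = T c"
  proof (cases "c \<in> diagram lam")
    case False
    thus ?thesis using dom_to_syt_outside[OF ch] syt_outside[OF T] by simp
  next
    case c: True
    let ?l = "domino_level ch c"
    show ?thesis
    proof (cases "?l = 0")
      case True
      hence core: "c \<in> diagram (ch ! 0)" using in_diagram_domino_level[OF ch c] by simp
      hence "T c \<le> r" using sublevels[of 0] by simp
      thus ?thesis using dom_to_syt_core[OF core] T_range[OF c] r01 by auto
    next
      case False
      have l: "?l \<in> {1..n}" by (rule domino_level_new_cell(1)[OF ch c False])
      obtain p q where pq: "diagram (ch ! ?l) - diagram (ch ! (?l - 1)) = {p, q}"
        "q = (fst p, Suc (snd p)) \<or> q = (Suc (fst p), snd p)" "p \<in> diagram lam" "q \<in> diagram lam"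
        "dom_to_syt r n ch p = r + 2 * ?l - 1" "dom_to_syt r n ch q = r + 2 * ?l"
        by (rule dom_to_syt_domino[OF ch l])
      have between: "r + 2 * (?l - 1) < T x \<and> T x \<le> r + 2 * ?l" if "x \<in> {p, q}" for x
      proof -
        have "x \<in> diagram (ch ! ?l) - diagram (ch ! (?l - 1))" using that unfolding pq(1) .
        thus ?thesis using sublevels[of ?l] sublevels[of "?l - 1"] l by auto
      qed
      have "T p < T q" using syt_adjacent_less[OF T pq(4,2)] .
      hence "T p = r + 2 * ?l - 1" "T q = r + 2 * ?l" using between[of p] between[of q] l by auto
      moreover have "c \<in> {p, q}" using domino_level_new_cell(2)[OF ch c False] unfolding pq(1) .
      ultimately show ?thesis using pq(5,6) by auto
    qed
  qed
qed

lemma bij_betw_dom_to_syt: "bij_betw (dom_to_syt r n) (sdt r n lam) (domino_syt r n lam)"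
  unfolding bij_betw_def
proof
  show "inj_on (dom_to_syt r n) (sdt r n lam)" by (rule inj_on_dom_to_syt)
  show "dom_to_syt r n ` sdt r n lam = domino_syt r n lam"
  proof
    show "dom_to_syt r n ` sdt r n lam \<subseteq> domino_syt r n lam"
      using dom_to_syt_in_syt entries_form_domino_dom_to_syt by (auto simp: domino_syt_def)
    show "domino_syt r n lam \<subseteq> dom_to_syt r n ` sdt r n lam"
    proof
      fix T assume T: "T \<in> domino_syt r n lam"
      obtain ch where ch: "ch \<in> sdt r n lam"
        and sublevels: "\<forall>k\<le>n. diagram (ch ! k) = {c \<in> diagram lam. T c \<le> r + 2 * k}"
        using sdt_of_domino_syt[OF T] by blast
      have "T \<in> syt lam" using T by (simp add: domino_syt_def)
      hence "dom_to_syt r n ch = T" using sublevels by (intro dom_to_syt_eq_if_sublevels[OF ch]) auto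
      thus "T \<in> dom_to_syt r n ` sdt r n lam" using ch by blast
    qed
  qed
qed

lemma swap_first_unpaired:
  assumes "T \<in> syt lam - domino_syt r n lam"
  defines "T' \<equiv> swap_first_unpaired r n lam T"
  shows "T' \<in> syt lam - domino_syt r n lam" "swap_first_unpaired r n lam T' = T"
    "tsign lam T' = - tsign lam T"
proof -
  have T: "T \<in> syt lam" and nonempty: "unpaired r n lam T \<noteq> {}"
    using assms(1) by (auto simp: domino_syt_eq_unpaired_empty)
  define k0 where "k0 = Min (unpaired r n lam T)"
  have "k0 \<in> unpaired r n lam T"
    unfolding k0_def using nonempty by (intro Min_in) (simp_all add: unpaired_def)
  hence k0: "k0 \<in> {1..n}" "\<not> entries_form_domino lam (r + 2 * k0 - 1) T" by (auto simp: unpaired_def)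
  define a where "a = r + 2 * k0 - 1"
  have T': "T' = transpose a (Suc a) \<circ> T"
    unfolding T'_def swap_first_unpaired_def a_def k0_def Let_def ..
  have a: "1 \<le> a" "Suc a \<le> psize lam" using k0(1) psize_lam unfolding a_def by auto
  have "T' \<in> syt lam" unfolding T' using transpose_syt[OF partition_lam T a] k0(2) a_def by simp
  moreover have same: "unpaired r n lam T' = unpaired r n lam T"
    unfolding T' a_def by (rule unpaired_transpose[OF k0(1)])
  ultimately show "T' \<in> syt lam - domino_syt r n lam"
    using nonempty by (auto simp: domino_syt_eq_unpaired_empty)
  have "swap_first_unpaired r n lam T' = transpose a (Suc a) \<circ> T'"
    unfolding swap_first_unpaired_def same Let_def k0_def[symmetric] a_def[symmetric] ..
  also have "\<dots> = T" unfolding T' by (simp add: fun_eq_iff)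
  finally show "swap_first_unpaired r n lam T' = T" .
  show "tsign lam T' = - tsign lam T" unfolding T' by (rule tsign_transpose[OF T a])
qed

lemma sum_tsign_non_domino_syt: "(\<Sum>T\<in>syt lam - domino_syt r n lam. tsign lam T) = 0"
proof (rule sum_involution_eq_0[where h = "swap_first_unpaired r n lam"])
  fix T assume T: "T \<in> syt lam - domino_syt r n lam"
  show "tsign lam (swap_first_unpaired r n lam T) + tsign lam T = 0"
    using swap_first_unpaired(3)[OF T] by simp
  show "swap_first_unpaired r n lam T \<in> syt lam - domino_syt r n lam"
    by (rule swap_first_unpaired(1)[OF T])
  show "swap_first_unpaired r n lam (swap_first_unpaired r n lam T) = T"
    by (rule swap_first_unpaired(2)[OF T])
  show "swap_first_unpaired r n lam T \<noteq> T"
    using swap_first_unpaired(3)[OF T] tsign_neq_0[of lam T] by auto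
qed

end

theorem proposition4p1:
  fixes r n :: nat and lam :: "nat list"
  assumes "r \<in> {0, 1}" and "n \<ge> 1" and "lam \<in> P_set r n"
  shows "I_lam lam = (\<Sum>D\<in>sdt r n lam. dsign r n lam D)"
proof -
  have "is_partition lam" and "psize lam = r + 2 * n"
    using assms(1,3) by (auto simp: P_set_def delta_def psize_def)
  then interpret domino_shape r n lam using assms(1) by unfold_locales
  have "domino_syt r n lam \<subseteq> syt lam" by (auto simp: domino_syt_def)
  hence "I_lam lam = (\<Sum>T\<in>domino_syt r n lam. tsign lam T)
                     + (\<Sum>T\<in>syt lam - domino_syt r n lam. tsign lam T)"
    unfolding I_lam_def using sum.subset_diff[OF _ finite_syt] by (simp add: add.commute)
  also have "\<dots> = (\<Sum>T\<in>domino_syt r n lam. tsign lam T)"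
    by (simp add: sum_tsign_non_domino_syt)
  also have "\<dots> = (\<Sum>D\<in>sdt r n lam. dsign r n lam D)"
    unfolding dsign_def by (rule sum.reindex_bij_betw[OF bij_betw_dom_to_syt, symmetric])
  finally show ?thesis .
qed

end
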